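(* Let $k\ge2$ be a power of two, $A,B\subseteq\Gamma$ finite sets, and $P\subseteq A-B$. Then $$\left(\frac{\sum_{x\in P}r(x)}{|A|^{1/2}|B|^{1/2}}\right)^{4k}\le\mathsf{E}_{2k}(A,\dots,A,B,\dots,B)\,\mathsf{T}_k(P),$$ where $r(x)=|\{(a,b)\in A\times B: a-b=x\}|$.
   Context: $\Gamma$ is an abelian group. $(f\circ f)(x)=\sum_y f(y)f(y+x)$. $\mathsf{E}_{2k}(A,\dots,A,B,\dots,B)$ with $k$ copies of $A$ and $k$ of $B$ is $\sum_x(A\circ A)(x)^k(B\circ B)(x)^k$. $\mathsf{T}_k(P)=|\{(p_1,\dots,p_k,p_1',\dots,p_k')\in P^{2k}: p_1+\dots+p_k=p_1'+\dots+p_k'\}|$. *)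

theory Defs
  imports Complex_Main
begin

definition corr :: "'a::ab_group_add set \<Rightarrow> 'a \<Rightarrow> nat" where
  "corr A x = card {y \<in> A. y + x \<in> A}"

definition diffset :: "'a::ab_group_add set \<Rightarrow> 'a set \<Rightarrow> 'a set" where
  "diffset A B = {a - b | a b. a \<in> A \<and> b \<in> B}"

text \<open>E_{2k}(A,..,A,B,..,B) = sum_x (A o A)(x)^k (B o B)(x)^k.  The summand vanishes
  outside the finite set A - A (the support of A o A), so we sum over it.\<close>
definition E2k :: "nat \<Rightarrow> 'a::ab_group_add set \<Rightarrow> 'a set \<Rightarrow> nat" where
  "E2k k A B = (\<Sum>x\<in>diffset A A. corr A x ^ k * corr B x ^ k)"

definition Tk :: "nat \<Rightarrow> 'a::ab_group_add set \<Rightarrow> nat" where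
  "Tk k P = card {(ps, qs). length ps = k \<and> length qs = k \<and> set ps \<subseteq> P \<and> set qs \<subseteq> P
                  \<and> sum_list ps = sum_list qs}"

definition rep :: "'a::ab_group_add set \<Rightarrow> 'a set \<Rightarrow> 'a \<Rightarrow> nat" where
  "rep A B x = card {(a, b). a \<in> A \<and> b \<in> B \<and> a - b = x}"

end

theory Submission
  imports Defs "HOL-Analysis.Convex"
begin

text \<open>Join \<open>a \<in> A\<close> and \<open>b \<in> B\<close> by an edge when \<open>a - b \<in> P\<close>, and let \<open>N u v\<close> be the number of
  common neighbours of \<open>u, v \<in> A\<close>. The sum of \<open>r\<close> over \<open>P\<close> is the number of edges, so by
  Cauchy--Schwarz its square is at most \<open>|B|\<close> times the total mass of \<open>N\<close>. As \<open>N\<close> is symmetric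
  and nonnegative and \<open>k\<close> is a power of two, iterating Cauchy--Schwarz bounds the \<open>k\<close>-th power
  of that mass by \<open>|A|\<^sup>k tr N\<^sup>k\<close>, and \<open>tr N\<^sup>k\<close> counts closed walks of length \<open>2k\<close>. The labels
  \<open>a\<^sub>i - b\<^sub>i\<close> and \<open>a\<^sub>i\<^sub>+\<^sub>1 - b\<^sub>i\<close> of the edges of a closed walk form a tuple counted by
  \<open>T\<^sub>k(P)\<close>, and two walks with the same labels are translates of each other by some
  \<open>x \<in> A - A\<close>; a last Cauchy--Schwarz over the fibres of the labelling gives
  \<open>#walks\<^sup>2 \<le> T\<^sub>k(P) E\<^sub>2\<^sub>k\<close>.\<close>

section \<open>Powers of a symmetric kernel\<close>

fun kernel_pow :: "'a set \<Rightarrow> ('a \<Rightarrow> 'a \<Rightarrow> real) \<Rightarrow> nat \<Rightarrow> 'a \<Rightarrow> 'a \<Rightarrow> real" where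
  "kernel_pow A N 0 u w = of_bool (u = w)"
| "kernel_pow A N (Suc j) u w = (\<Sum>v\<in>A. N u v * kernel_pow A N j v w)"

definition kernel_mass :: "'a set \<Rightarrow> ('a \<Rightarrow> 'a \<Rightarrow> real) \<Rightarrow> nat \<Rightarrow> real" where
  "kernel_mass A N j = (\<Sum>u\<in>A. \<Sum>v\<in>A. kernel_pow A N j u v)"

definition kernel_trace :: "'a set \<Rightarrow> ('a \<Rightarrow> 'a \<Rightarrow> real) \<Rightarrow> nat \<Rightarrow> real" where
  "kernel_trace A N j = (\<Sum>u\<in>A. kernel_pow A N j u u)"

lemma kernel_pow_add:
  assumes "finite A" "u \<in> A"
  shows "kernel_pow A N (i + j) u w = (\<Sum>v\<in>A. kernel_pow A N i u v * kernel_pow A N j v w)"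
  using assms(2)
proof (induction i arbitrary: u)
  case 0
  have "A \<inter> {v. u = v} = {u}" using 0 by auto
  then show ?case using assms(1) by simp
next
  case (Suc i)
  have "kernel_pow A N (Suc i + j) u w
      = (\<Sum>v\<in>A. \<Sum>y\<in>A. N u v * kernel_pow A N i v y * kernel_pow A N j y w)"
    using Suc.IH by (simp add: sum_distrib_left mult.assoc)
  also have "\<dots> = (\<Sum>y\<in>A. \<Sum>v\<in>A. N u v * kernel_pow A N i v y * kernel_pow A N j y w)"
    by (rule sum.swap)
  finally show ?case by (simp add: sum_distrib_right)
qed

lemma kernel_pow_1:
  assumes "finite A" "w \<in> A"
  shows "kernel_pow A N 1 u w = N u w"
proof -
  have "A \<inter> {v. v = w} = {w}" using assms(2) by auto
  then show ?thesis using assms(1) by simp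
qed

lemma kernel_pow_nonneg:
  assumes "\<And>u v. N u v \<ge> 0"
  shows "kernel_pow A N j u w \<ge> 0"
  by (induction j arbitrary: u) (auto intro!: sum_nonneg mult_nonneg_nonneg assms)

lemma kernel_mass_nonneg:
  assumes "\<And>u v. N u v \<ge> 0"
  shows "kernel_mass A N j \<ge> 0"
  unfolding kernel_mass_def by (intro sum_nonneg kernel_pow_nonneg assms)

lemma kernel_pow_sym:
  assumes "finite A" "\<And>u v. u \<in> A \<Longrightarrow> v \<in> A \<Longrightarrow> N u v = N v u"
    and "u \<in> A" "w \<in> A"
  shows "kernel_pow A N j u w = kernel_pow A N j w u"
  using assms(3,4)
proof (induction j arbitrary: u w)
  case 0
  then show ?case by auto
next
  case (Suc j)
  have "kernel_pow A N (Suc j) u w = (\<Sum>v\<in>A. kernel_pow A N j w v * N v u)"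
    using Suc assms(2) by (auto intro!: sum.cong simp: mult.commute)
  also have "\<dots> = (\<Sum>v\<in>A. kernel_pow A N j w v * kernel_pow A N 1 v u)"
    using kernel_pow_1[OF assms(1) Suc.prems(1)] by simp
  also have "\<dots> = kernel_pow A N (j + 1) w u"
    by (simp only: kernel_pow_add[OF assms(1) Suc.prems(2)])
  finally show ?case by simp
qed

lemma kernel_mass_square_le:
  assumes "finite A" "\<And>u v. u \<in> A \<Longrightarrow> v \<in> A \<Longrightarrow> N u v = N v u"
  shows "(kernel_mass A N j)\<^sup>2 \<le> kernel_mass A N (j + j) * card A"
proof -
  define row where "row v = (\<Sum>w\<in>A. kernel_pow A N j v w)" for v
  have "kernel_mass A N (j + j) = (\<Sum>u\<in>A. \<Sum>v\<in>A. kernel_pow A N j u v * row v)"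
    unfolding kernel_mass_def row_def sum_distrib_left
    by (rule sum.cong[OF refl]) (simp add: kernel_pow_add[OF assms(1)] sum_distrib_left, rule sum.swap)
  also have "\<dots> = (\<Sum>v\<in>A. (\<Sum>u\<in>A. kernel_pow A N j v u) * row v)"
    unfolding sum_distrib_right using kernel_pow_sym[where N = N, OF assms]
    by (subst sum.swap) (auto intro!: sum.cong)
  also have "\<dots> = (\<Sum>v\<in>A. (row v)\<^sup>2)"
    by (simp add: row_def power2_eq_square)
  finally have "kernel_mass A N (j + j) = (\<Sum>v\<in>A. (row v)\<^sup>2)" .
  moreover have "kernel_mass A N j = (\<Sum>v\<in>A. row v)"
    by (simp add: kernel_mass_def row_def)
  ultimately show ?thesis
    using sum_squared_le_sum_of_squares[of row A] by simp
qed

lemma kernel_mass_square_le_trace: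
  assumes "finite A" "\<And>u v. u \<in> A \<Longrightarrow> v \<in> A \<Longrightarrow> N u v = N v u"
  shows "(kernel_mass A N j)\<^sup>2 \<le> kernel_trace A N (j + j) * (real (card A))\<^sup>2"
proof -
  let ?P = "\<lambda>p. kernel_pow A N j (fst p) (snd p)"
  have "kernel_trace A N (j + j) = (\<Sum>u\<in>A. \<Sum>v\<in>A. kernel_pow A N j u v * kernel_pow A N j v u)"
    by (simp add: kernel_trace_def kernel_pow_add[OF assms(1)])
  also have "\<dots> = (\<Sum>u\<in>A. \<Sum>v\<in>A. (kernel_pow A N j u v)\<^sup>2)"
    unfolding power2_eq_square using kernel_pow_sym[where N = N, OF assms] by (auto intro!: sum.cong)
  also have "\<dots> = (\<Sum>p\<in>A \<times> A. (?P p)\<^sup>2)"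
    by (simp add: sum.cartesian_product case_prod_beta)
  finally have "kernel_trace A N (j + j) = (\<Sum>p\<in>A \<times> A. (?P p)\<^sup>2)" .
  moreover have "kernel_mass A N j = (\<Sum>p\<in>A \<times> A. ?P p)"
    by (simp add: kernel_mass_def sum.cartesian_product case_prod_beta)
  ultimately show ?thesis
    using sum_squared_le_sum_of_squares[of ?P "A \<times> A"]
    by (simp add: card_cartesian_product power2_eq_square)
qed

lemma kernel_mass_pow2_le:
  assumes "finite A" "\<And>u v. u \<in> A \<Longrightarrow> v \<in> A \<Longrightarrow> N u v = N v u" "\<And>u v. N u v \<ge> 0"
  shows "(kernel_mass A N 1) ^ 2 ^ m \<le> kernel_mass A N (2 ^ m) * real (card A) ^ (2 ^ m - 1)"
proof (induction m)
  case 0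
  then show ?case by simp
next
  case (Suc m)
  have exp: "Suc (2 * (2 ^ m - 1)) = (2::nat) ^ Suc m - 1"
    by (induction m) auto
  have "(kernel_mass A N 1) ^ 2 ^ Suc m = ((kernel_mass A N 1) ^ 2 ^ m)\<^sup>2"
    by (simp add: power_mult[symmetric] mult.commute)
  also have "\<dots> \<le> (kernel_mass A N (2 ^ m) * real (card A) ^ (2 ^ m - 1))\<^sup>2"
    using Suc.IH kernel_mass_nonneg[where N = N, OF assms(3)] by (intro power_mono) auto
  also have "\<dots> = (kernel_mass A N (2 ^ m))\<^sup>2 * real (card A) ^ (2 * (2 ^ m - 1))"
    by (simp add: power_mult_distrib power_mult[symmetric] mult.commute)
  also have "\<dots> \<le> kernel_mass A N (2 ^ Suc m) * card A * real (card A) ^ (2 * (2 ^ m - 1))"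
    using kernel_mass_square_le[where N = N and j = "2 ^ m", OF assms(1,2)]
    by (intro mult_right_mono) (auto simp: mult_2)
  also have "\<dots> = kernel_mass A N (2 ^ Suc m) * real (card A) ^ (2 ^ Suc m - 1)"
    by (simp only: mult.assoc power_Suc[symmetric] exp)
  finally show ?case .
qed

lemma kernel_mass_pow_le_trace:
  assumes "finite A" "\<And>u v. u \<in> A \<Longrightarrow> v \<in> A \<Longrightarrow> N u v = N v u" "\<And>u v. N u v \<ge> 0"
  shows "(kernel_mass A N 1) ^ 2 ^ Suc m \<le> kernel_trace A N (2 ^ Suc m) * real (card A) ^ 2 ^ Suc m"
proof -
  have exp: "2 + 2 * (2 ^ m - 1) = (2::nat) ^ Suc m"
    by (induction m) auto
  have "(kernel_mass A N 1) ^ 2 ^ Suc m = ((kernel_mass A N 1) ^ 2 ^ m)\<^sup>2"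
    by (simp add: power_mult[symmetric] mult.commute)
  also have "\<dots> \<le> (kernel_mass A N (2 ^ m) * real (card A) ^ (2 ^ m - 1))\<^sup>2"
    using kernel_mass_pow2_le[where N = N and m = m, OF assms] kernel_mass_nonneg[where N = N, OF assms(3)]
    by (intro power_mono) auto
  also have "\<dots> = (kernel_mass A N (2 ^ m))\<^sup>2 * real (card A) ^ (2 * (2 ^ m - 1))"
    by (simp add: power_mult_distrib power_mult[symmetric] mult.commute)
  also have "\<dots> \<le> kernel_trace A N (2 ^ Suc m) * (real (card A))\<^sup>2 * real (card A) ^ (2 * (2 ^ m - 1))"
    using kernel_mass_square_le_trace[where N = N and j = "2 ^ m", OF assms(1,2)]
    by (intro mult_right_mono) (auto simp: mult_2)
  also have "\<dots> = kernel_trace A N (2 ^ Suc m) * real (card A) ^ 2 ^ Suc m"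
    by (simp only: mult.assoc power_add[symmetric] exp)
  finally show ?thesis .
qed

section \<open>Walks in the difference graph\<close>

definition codegree :: "'a::ab_group_add set \<Rightarrow> 'a set \<Rightarrow> 'a \<Rightarrow> 'a \<Rightarrow> real" where
  "codegree B P u v = real (card {b \<in> B. u - b \<in> P \<and> v - b \<in> P})"

lemma codegree_commute: "codegree B P u v = codegree B P v u"
  by (simp add: codegree_def conj_commute)

text \<open>A walk \<open>u = a\<^sub>0, b\<^sub>0, a\<^sub>1, b\<^sub>1, \<dots>, b\<^sub>j\<^sub>-\<^sub>1, a\<^sub>j = w\<close> in the bipartite graph on \<open>A\<close> and \<open>B\<close>
  with \<open>a \<sim> b \<longleftrightarrow> a - b \<in> P\<close> is stored as \<open>as = [a\<^sub>0, \<dots>, a\<^sub>j\<^sub>-\<^sub>1]\<close> and \<open>bs = [b\<^sub>0, \<dots>, b\<^sub>j\<^sub>-\<^sub>1]\<close>;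
  the vertex \<open>a\<^sub>i\<close> is \<open>(as @ [w]) ! i\<close>, which also covers \<open>a\<^sub>0 = u\<close> when \<open>j = 0\<close>. Closed walks
  of length \<open>k\<close> have \<open>a\<^sub>k = a\<^sub>0\<close>, so that \<open>a\<^sub>i\<^sub>+\<^sub>1\<close> is \<open>rotate1 as ! i\<close>.\<close>
definition walks :: "'a::ab_group_add set \<Rightarrow> 'a set \<Rightarrow> 'a set \<Rightarrow> nat \<Rightarrow> 'a \<Rightarrow> 'a \<Rightarrow> ('a list \<times> 'a list) set" where
  "walks A B P j u w = {(as, bs). length as = j \<and> length bs = j \<and> set as \<subseteq> A \<and> set bs \<subseteq> B \<and>
     (\<forall>i<j. as ! i - bs ! i \<in> P \<and> (as @ [w]) ! Suc i - bs ! i \<in> P) \<and> (as @ [w]) ! 0 = u}"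

definition closed_walks :: "'a::ab_group_add set \<Rightarrow> 'a set \<Rightarrow> 'a set \<Rightarrow> nat \<Rightarrow> ('a list \<times> 'a list) set" where
  "closed_walks A B P k = {(as, bs). length as = k \<and> length bs = k \<and> set as \<subseteq> A \<and> set bs \<subseteq> B \<and>
     (\<forall>i<k. as ! i - bs ! i \<in> P \<and> rotate1 as ! i - bs ! i \<in> P)}"

definition list_pairs :: "nat \<Rightarrow> 'a set \<Rightarrow> 'b set \<Rightarrow> ('a list \<times> 'b list) set" where
  "list_pairs k A B = {as. set as \<subseteq> A \<and> length as = k} \<times> {bs. set bs \<subseteq> B \<and> length bs = k}"

lemma finite_list_pairs: "finite A \<Longrightarrow> finite B \<Longrightarrow> finite (list_pairs k A B)"
  by (simp add: list_pairs_def finite_lists_length_eq)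

lemma walks_subset_list_pairs: "walks A B P j u w \<subseteq> list_pairs j A B"
  by (auto simp: walks_def list_pairs_def)

lemma closed_walks_subset_list_pairs: "closed_walks A B P k \<subseteq> list_pairs k A B"
  by (auto simp: closed_walks_def list_pairs_def)

lemma finite_walks: "finite A \<Longrightarrow> finite B \<Longrightarrow> finite (walks A B P j u w)"
  using finite_subset[OF walks_subset_list_pairs finite_list_pairs] .

lemma walks_0: "walks A B P 0 u w = (if u = w then {([], [])} else {})"
  by (auto simp: walks_def)

lemma Cons_in_walks_Suc:
  "(x # as, b # bs) \<in> walks A B P (Suc j) u w \<longleftrightarrow>
     x = u \<and> u \<in> A \<and> b \<in> B \<and> u - b \<in> P \<and> (as @ [w]) ! 0 - b \<in> P \<and>
     (as, bs) \<in> walks A B P j ((as @ [w]) ! 0) w"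
  by (auto simp: walks_def All_less_Suc2)

lemma walks_Suc:
  assumes "u \<in> A" "w \<in> A"
  shows "walks A B P (Suc j) u w =
    (\<lambda>((v, b), as, bs). (u # as, b # bs)) `
      (SIGMA vb : (SIGMA v : A. {b \<in> B. u - b \<in> P \<and> v - b \<in> P}). walks A B P j (fst vb) w)"
    (is "?W = ?f ` ?S")
proof
  show "?W \<subseteq> ?f ` ?S"
  proof
    fix z assume z: "z \<in> ?W"
    then obtain x as b bs where xs: "z = (x # as, b # bs)"
      by (auto simp: walks_def length_Suc_conv)
    define v where "v = (as @ [w]) ! 0"
    have "v \<in> A"
      using z assms by (cases as) (auto simp: xs v_def walks_def)
    then show "z \<in> ?f ` ?S"
      using z unfolding xs Cons_in_walks_Suc v_def[symmetric]
      by (auto intro!: image_eqI[where x = "((v, b), (as, bs))"])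
  qed
next
  show "?f ` ?S \<subseteq> ?W"
  proof
    fix z assume "z \<in> ?f ` ?S"
    then obtain v b as bs where z: "z = (u # as, b # bs)" and "b \<in> B" "u - b \<in> P" "v - b \<in> P"
      and walk: "(as, bs) \<in> walks A B P j v w"
      by auto
    moreover have "(as @ [w]) ! 0 = v"
      using walk by (simp add: walks_def)
    ultimately show "z \<in> ?W"
      using assms(1) by (simp add: Cons_in_walks_Suc)
  qed
qed

lemma card_walks:
  assumes "finite A" "finite B" "u \<in> A" "w \<in> A"
  shows "real (card (walks A B P j u w)) = kernel_pow A (codegree B P) j u w"
  using assms(3)
proof (induction j arbitrary: u)
  case 0
  then show ?case by (simp add: walks_0)
next
  case (Suc j)
  let ?S = "SIGMA v : A. {b \<in> B. u - b \<in> P \<and> v - b \<in> P}"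
  have "inj_on (\<lambda>((v, b), as, bs). (u # as, b # bs)) (SIGMA vb : ?S. walks A B P j (fst vb) w)"
    by (rule inj_onI) (auto simp: walks_def)
  then have "card (walks A B P (Suc j) u w) = card (SIGMA vb : ?S. walks A B P j (fst vb) w)"
    by (simp add: walks_Suc[OF Suc.prems assms(4)] card_image)
  also have "\<dots> = (\<Sum>vb\<in>?S. card (walks A B P j (fst vb) w))"
    using assms by (simp add: finite_walks)
  also have "\<dots> = (\<Sum>v\<in>A. \<Sum>b\<in>{b \<in> B. u - b \<in> P \<and> v - b \<in> P}. card (walks A B P j v w))"
    by (subst sum.Sigma) (use assms in \<open>auto simp: finite_walks split_def intro!: sum.cong\<close>)
  finally show ?case
    by (simp add: Suc.IH codegree_def of_nat_sum)
qed

lemma rotate1_nth_eq_append_nth: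
  "i < length as \<Longrightarrow> rotate1 as ! i = (as @ [as ! 0]) ! Suc i"
  by (cases as) (auto simp: nth_append)

lemma closed_walks_eq_UN_walks:
  assumes "k > 0"
  shows "closed_walks A B P k = (\<Union>u\<in>A. walks A B P k u u)"
proof
  show "closed_walks A B P k \<subseteq> (\<Union>u\<in>A. walks A B P k u u)"
  proof
    fix z assume z: "z \<in> closed_walks A B P k"
    then obtain as bs where zs: "z = (as, bs)" "length as = k" "set as \<subseteq> A"
      by (auto simp: closed_walks_def)
    then have "as ! 0 \<in> A" using assms by (auto simp: nth_mem subsetD)
    moreover have "z \<in> walks A B P k (as ! 0) (as ! 0)"
      using z zs assms by (auto simp: closed_walks_def walks_def rotate1_nth_eq_append_nth nth_append)
    ultimately show "z \<in> (\<Union>u\<in>A. walks A B P k u u)" by blast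
  qed
  show "(\<Union>u\<in>A. walks A B P k u u) \<subseteq> closed_walks A B P k"
    using assms by (auto simp: closed_walks_def walks_def rotate1_nth_eq_append_nth nth_append)
qed

lemma card_closed_walks:
  assumes "k > 0" "finite A" "finite B"
  shows "real (card (closed_walks A B P k)) = kernel_trace A (codegree B P) k"
proof -
  have "walks A B P k u u \<inter> walks A B P k v v = {}" if "u \<noteq> v" for u v
    using assms(1) that by (auto simp: walks_def nth_append)
  then have "card (closed_walks A B P k) = (\<Sum>u\<in>A. card (walks A B P k u u))"
    unfolding closed_walks_eq_UN_walks[OF assms(1)]
    by (intro card_UN_disjoint) (use assms finite_walks in auto)
  then show ?thesis
    using assms by (simp add: kernel_trace_def card_walks of_nat_sum)
qed

section \<open>Closed walks with equal edge labels\<close>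

lemma card_squared_le_card_times_collisions:
  assumes "finite W" "finite T" "f ` W \<subseteq> T"
  shows "(real (card W))\<^sup>2 \<le> real (card T) * real (card {(z, z'). z \<in> W \<and> z' \<in> W \<and> f z = f z'})"
proof -
  define fibre where "fibre c = {z \<in> W. f z = c}" for c
  let ?R = "{(z, z'). z \<in> W \<and> z' \<in> W \<and> f z = f z'}"
  have R_finite: "finite ?R"
    by (rule finite_subset[of _ "W \<times> W"]) (use assms(1) in auto)
  have R_image: "(\<lambda>p. f (fst p)) ` ?R \<subseteq> T"
    using assms(3) by auto
  have "{p \<in> ?R. f (fst p) = c} = fibre c \<times> fibre c" for c
    by (auto simp: fibre_def)
  then have "card ?R = (\<Sum>c\<in>T. card (fibre c \<times> fibre c))"
    using sum.group[OF R_finite assms(2) R_image, of "\<lambda>_. 1", symmetric] by (simp only: card_eq_sum)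
  then have R: "real (card ?R) = (\<Sum>c\<in>T. (real (card (fibre c)))\<^sup>2)"
    by (simp add: card_cartesian_product power2_eq_square)
  have "card W = (\<Sum>c\<in>T. card (fibre c))"
    using sum.group[OF assms, of "\<lambda>_. 1", symmetric] unfolding fibre_def by (simp only: card_eq_sum)
  then have "real (card W) = (\<Sum>c\<in>T. real (card (fibre c)))"
    by simp
  then show ?thesis
    using sum_squared_le_sum_of_squares[of "\<lambda>c. real (card (fibre c))" T] R by (simp add: mult.commute)
qed

fun edge_labels :: "'a::ab_group_add list \<times> 'a list \<Rightarrow> 'a list \<times> 'a list" where
  "edge_labels (as, bs) = (map2 (-) as bs, map2 (-) (rotate1 as) bs)"

definition additive_tuples :: "nat \<Rightarrow> 'a::ab_group_add set \<Rightarrow> ('a list \<times> 'a list) set" where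
  "additive_tuples k P = {(ps, qs). length ps = k \<and> length qs = k \<and> set ps \<subseteq> P \<and> set qs \<subseteq> P
     \<and> sum_list ps = sum_list qs}"

fun translate :: "'a::ab_group_add \<Rightarrow> 'a list \<times> 'a list \<Rightarrow> 'a list \<times> 'a list" where
  "translate x (as, bs) = (map (\<lambda>a. a + x) as, map (\<lambda>b. b + x) bs)"

lemma sum_list_map2_diff:
  fixes as bs :: "'a::ab_group_add list"
  shows "length as = length bs \<Longrightarrow> sum_list (map2 (-) as bs) = sum_list as - sum_list bs"
  by (induction as bs rule: list_induct2) simp_all

lemma sum_list_rotate1: "sum_list (rotate1 (xs :: 'a::ab_group_add list)) = sum_list xs"
  by (cases xs) (simp_all add: add.commute)

lemma edge_labels_in_additive_tuples:
  assumes "z \<in> closed_walks A B P k"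
  shows "edge_labels z \<in> additive_tuples k P"
proof -
  obtain as bs where "z = (as, bs)" "length as = k" "length bs = k"
    "\<forall>i<k. as ! i - bs ! i \<in> P \<and> rotate1 as ! i - bs ! i \<in> P"
    using assms by (auto simp: closed_walks_def)
  then show ?thesis
    by (auto simp: additive_tuples_def set_zip sum_list_map2_diff sum_list_rotate1)
qed

lemma edge_labels_eq_imp_translate:
  assumes len: "length as' = length as" "length bs = length as" "length bs' = length as"
    and labels: "edge_labels (as, bs) = edge_labels (as', bs')"
  shows "(as', bs') = translate (as' ! 0 - as ! 0) (as, bs)"
proof -
  define d where "d i = as' ! i - as ! i" for i
  have left: "bs' ! i - bs ! i = d i" if "i < length as" for i
  proof -
    have "as ! i - bs ! i = as' ! i - bs' ! i"
      using labels len that by (simp add: list_eq_iff_nth_eq)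
    then show ?thesis by (simp add: d_def algebra_simps)
  qed
  have right: "bs' ! i - bs ! i = d (Suc i)" if "Suc i < length as" for i
  proof -
    have "rotate1 as ! i - bs ! i = rotate1 as' ! i - bs' ! i"
      using labels len that by (simp add: list_eq_iff_nth_eq)
    then show ?thesis
      using len that by (simp add: nth_rotate1 d_def algebra_simps)
  qed
  have const: "d i = d 0" if "i < length as" for i
    using that by (induction i) (auto simp: left right[symmetric])
  define x where "x = as' ! 0 - as ! 0"
  have "as' ! i - as ! i = x" "bs' ! i - bs ! i = x" if "i < length as" for i
    using const[OF that] left[OF that] by (simp_all add: d_def x_def)
  then have "as' ! i = as ! i + x" "bs' ! i = bs ! i + x" if "i < length as" for i
    using that by (simp_all add: diff_eq_eq add.commute)
  then have "as' = map (\<lambda>a. a + x) as" "bs' = map (\<lambda>b. b + x) bs"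
    using len by (simp_all add: list_eq_iff_nth_eq)
  then show ?thesis
    by (simp add: x_def)
qed

lemma card_translate_stable:
  assumes "finite A" "finite B"
  shows "card {z \<in> list_pairs k A B. translate x z \<in> list_pairs k A B} = corr A x ^ k * corr B x ^ k"
proof -
  have "z \<in> list_pairs k A B \<and> translate x z \<in> list_pairs k A B \<longleftrightarrow>
      z \<in> list_pairs k {y \<in> A. y + x \<in> A} {y \<in> B. y + x \<in> B}" for z
    by (cases z) (auto simp: list_pairs_def)
  then have "{z \<in> list_pairs k A B. translate x z \<in> list_pairs k A B}
      = list_pairs k {y \<in> A. y + x \<in> A} {y \<in> B. y + x \<in> B}"
    by blast
  then show ?thesis
    using assms by (simp add: list_pairs_def card_cartesian_product card_lists_length_eq corr_def)
qed

lemma finite_diffset: "finite A \<Longrightarrow> finite B \<Longrightarrow> finite (diffset A B)"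
  by (simp add: diffset_def finite_image_set2)

lemma card_label_collisions_le_E2k:
  assumes "finite A" "finite B" "k > 0"
  shows "card {(z, z'). z \<in> closed_walks A B P k \<and> z' \<in> closed_walks A B P k \<and> edge_labels z = edge_labels z'}
    \<le> E2k k A B"
proof -
  let ?R = "{(z, z'). z \<in> closed_walks A B P k \<and> z' \<in> closed_walks A B P k \<and> edge_labels z = edge_labels z'}"
  let ?S = "\<lambda>x. {z \<in> list_pairs k A B. translate x z \<in> list_pairs k A B}"
  have "?R \<subseteq> (\<Union>x\<in>diffset A A. (\<lambda>z. (z, translate x z)) ` ?S x)"
  proof
    fix p assume "p \<in> ?R"
    then obtain as bs as' bs' where p: "p = ((as, bs), (as', bs'))"
      and walks: "(as, bs) \<in> closed_walks A B P k" "(as', bs') \<in> closed_walks A B P k"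
      and labels: "edge_labels (as, bs) = edge_labels (as', bs')"
      by auto
    define x where "x = as' ! 0 - as ! 0"
    have len: "length as = k" "length as' = k" "length bs = k" "length bs' = k"
      and "set as \<subseteq> A" "set as' \<subseteq> A"
      using walks by (auto simp: closed_walks_def)
    then have "as ! 0 \<in> A" "as' ! 0 \<in> A"
      using assms(3) by (auto simp: nth_mem subsetD)
    then have "x \<in> diffset A A"
      by (auto simp: x_def diffset_def)
    moreover have "translate x (as, bs) = (as', bs')"
      using edge_labels_eq_imp_translate[OF _ _ _ labels] len by (simp add: x_def)
    moreover have "(as, bs) \<in> list_pairs k A B" "(as', bs') \<in> list_pairs k A B"
      using walks closed_walks_subset_list_pairs by blast+
    ultimately show "p \<in> (\<Union>x\<in>diffset A A. (\<lambda>z. (z, translate x z)) ` ?S x)"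
      unfolding p by force
  qed
  then have "card ?R \<le> card (\<Union>x\<in>diffset A A. (\<lambda>z. (z, translate x z)) ` ?S x)"
    using assms by (intro card_mono) (auto simp: finite_diffset finite_list_pairs)
  also have "\<dots> \<le> (\<Sum>x\<in>diffset A A. card ((\<lambda>z. (z, translate x z)) ` ?S x))"
    using assms by (intro card_UN_le finite_diffset)
  also have "\<dots> \<le> (\<Sum>x\<in>diffset A A. card (?S x))"
    using assms by (intro sum_mono card_image_le) (simp add: finite_list_pairs)
  finally show ?thesis
    by (simp add: E2k_def card_translate_stable[OF assms(1,2)])
qed

lemma card_closed_walks_squared_le:
  assumes "finite A" "finite B" "finite P" "k > 0"
  shows "(real (card (closed_walks A B P k)))\<^sup>2 \<le> real (Tk k P) * real (E2k k A B)"
proof -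
  have "finite (additive_tuples k P)"
    using finite_subset[OF _ finite_list_pairs[OF assms(3,3)], of "additive_tuples k P" k]
    by (auto simp: additive_tuples_def list_pairs_def)
  moreover have "finite (closed_walks A B P k)"
    using finite_subset[OF closed_walks_subset_list_pairs finite_list_pairs] assms by blast
  ultimately have "(real (card (closed_walks A B P k)))\<^sup>2 \<le> real (card (additive_tuples k P)) *
      real (card {(z, z'). z \<in> closed_walks A B P k \<and> z' \<in> closed_walks A B P k \<and> edge_labels z = edge_labels z'})"
    using edge_labels_in_additive_tuples by (intro card_squared_le_card_times_collisions) auto
  also have "\<dots> \<le> real (Tk k P) * real (E2k k A B)"
    using card_label_collisions_le_E2k[OF assms(1,2,4)]
    by (simp add: Tk_def additive_tuples_def mult_left_mono)
  finally show ?thesis .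
qed

section \<open>Double counting\<close>

lemma sum_rep_eq_sum_degree:
  assumes "finite A" "finite B" "finite P"
  shows "(\<Sum>x\<in>P. rep A B x) = (\<Sum>b\<in>B. card {a \<in> A. a - b \<in> P})"
proof -
  let ?S = "{(a, b). a \<in> A \<and> b \<in> B \<and> a - b \<in> P}"
  have S_finite: "finite ?S"
    by (rule finite_subset[of _ "A \<times> B"]) (use assms in auto)
  have S_image: "(\<lambda>(a, b). a - b) ` ?S \<subseteq> P"
    by auto
  have "{p \<in> ?S. (\<lambda>(a, b). a - b) p = x} = {(a, b). a \<in> A \<and> b \<in> B \<and> a - b = x}" if "x \<in> P" for x
    using that by auto
  then have "(\<Sum>x\<in>P. rep A B x) = card ?S"
    using sum.group[OF S_finite assms(3) S_image, of "\<lambda>_. 1"]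
    by (simp only: card_eq_sum rep_def cong: sum.cong)
  also have "?S = prod.swap ` (SIGMA b:B. {a \<in> A. a - b \<in> P})"
    by auto
  also have "card \<dots> = (\<Sum>b\<in>B. card {a \<in> A. a - b \<in> P})"
    using assms by (simp add: card_image)
  finally show ?thesis .
qed

lemma codegree_eq_sum:
  assumes "finite B"
  shows "codegree B P u v = (\<Sum>b\<in>B. of_bool (u - b \<in> P) * of_bool (v - b \<in> P))"
proof -
  have "{b \<in> B. u - b \<in> P \<and> v - b \<in> P} = B \<inter> {b. u - b \<in> P \<and> v - b \<in> P}"
    by blast
  then show ?thesis
    using assms by (simp add: codegree_def flip: of_bool_conj)
qed

lemma kernel_mass_codegree:
  assumes "finite A" "finite B"
  shows "kernel_mass A (codegree B P) 1 = (\<Sum>b\<in>B. (real (card {a \<in> A. a - b \<in> P}))\<^sup>2)"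
proof -
  have "kernel_mass A (codegree B P) 1
      = (\<Sum>u\<in>A. \<Sum>v\<in>A. \<Sum>b\<in>B. of_bool (u - b \<in> P) * of_bool (v - b \<in> P))"
    using assms by (simp add: kernel_mass_def kernel_pow_1 codegree_eq_sum)
  also have "\<dots> = (\<Sum>b\<in>B. (\<Sum>u\<in>A. of_bool (u - b \<in> P)) * (\<Sum>v\<in>A. of_bool (v - b \<in> P)))"
    unfolding sum_product by (subst sum.swap) (auto intro: sum.swap sum.cong)
  also have "\<dots> = (\<Sum>b\<in>B. (real (card {a \<in> A. a - b \<in> P}))\<^sup>2)"
    using assms by (simp add: power2_eq_square Int_def)
  finally show ?thesis .
qed

lemma chain_power_bound:
  fixes s g t a b E :: real
  assumes "0 \<le> s" "0 \<le> a" "0 \<le> b" "0 \<le> E" "k > 0"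
    and "s\<^sup>2 \<le> g * b" "g ^ k \<le> t * a ^ k" "t\<^sup>2 \<le> E"
  shows "(s / (sqrt a * sqrt b)) ^ (4 * k) \<le> E"
proof -
  have "s ^ (2 * k) \<le> (g * b) ^ k"
    using assms(6) by (simp add: power_mult power_mono)
  also have "\<dots> \<le> t * (a * b) ^ k"
    using mult_right_mono[OF assms(7), of "b ^ k"] assms(3) by (simp add: power_mult_distrib mult.assoc)
  finally have "(s ^ (2 * k))\<^sup>2 \<le> (t * (a * b) ^ k)\<^sup>2"
    by (simp add: power_mono)
  then have "s ^ (4 * k) \<le> t\<^sup>2 * (a * b) ^ (2 * k)"
    by (simp add: power_mult_distrib power_mult[symmetric] mult.commute)
  also have "\<dots> \<le> E * (a * b) ^ (2 * k)"
    using assms(2,3,8) by (simp add: mult_right_mono)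
  finally have main: "s ^ (4 * k) \<le> E * (a * b) ^ (2 * k)" .
  show ?thesis
  proof (cases "a = 0 \<or> b = 0")
    case True
    then show ?thesis using assms(4,5) by (auto simp: zero_power)
  next
    case False
    have "(sqrt a * sqrt b) ^ (4 * k) = ((sqrt a * sqrt b)\<^sup>2) ^ (2 * k)"
      by (simp flip: power_mult)
    also have "(sqrt a * sqrt b)\<^sup>2 = a * b"
      using assms(2,3) by (simp add: power_mult_distrib)
    finally have "(sqrt a * sqrt b) ^ (4 * k) = (a * b) ^ (2 * k)" .
    moreover have "a * b > 0"
      using False assms(2,3) by simp
    ultimately show ?thesis
      using main by (simp add: power_divide divide_le_eq)
  qed
qed

theorem proposition6:
  fixes A B P :: "'a::ab_group_add set" and k :: nat
  assumes "k \<ge> 2" and "\<exists>m. k = 2 ^ m"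
    and "finite A" and "finite B"
    and "P \<subseteq> diffset A B"
  shows "((\<Sum>x\<in>P. real (rep A B x)) / (sqrt (real (card A)) * sqrt (real (card B)))) ^ (4 * k)
           \<le> real (E2k k A B) * real (Tk k P)"
proof -
  obtain m where "k = 2 ^ m"
    using assms(2) by blast
  moreover have "m \<noteq> 0"
    using assms(1) calculation by (cases m) auto
  ultimately obtain m' where k: "k = 2 ^ Suc m'"
    using not0_implies_Suc by blast
  have P: "finite P"
    using assms(3-5) finite_diffset finite_subset by blast
  define deg where "deg b = real (card {a \<in> A. a - b \<in> P})" for b
  have "(\<Sum>x\<in>P. real (rep A B x)) = (\<Sum>b\<in>B. deg b)"
    using sum_rep_eq_sum_degree[OF assms(3,4) P] by (simp only: deg_def flip: of_nat_sum)
  then have "(\<Sum>x\<in>P. real (rep A B x))\<^sup>2 \<le> kernel_mass A (codegree B P) 1 * card B"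
    using sum_squared_le_sum_of_squares[of deg B] kernel_mass_codegree[OF assms(3,4)]
    by (simp add: deg_def)
  moreover have "kernel_mass A (codegree B P) 1 ^ k \<le> real (card (closed_walks A B P k)) * real (card A) ^ k"
  proof -
    have "kernel_mass A (codegree B P) 1 ^ k \<le> kernel_trace A (codegree B P) k * real (card A) ^ k"
      unfolding k by (rule kernel_mass_pow_le_trace) (simp_all add: assms(3) codegree_commute codegree_def)
    then show ?thesis
      using card_closed_walks[of k A B P] assms(3,4) k by simp
  qed
  moreover have "(real (card (closed_walks A B P k)))\<^sup>2 \<le> real (E2k k A B) * real (Tk k P)"
    using card_closed_walks_squared_le[OF assms(3,4) P] k by (simp add: mult.commute)
  ultimately show ?thesis
    using k by (intro chain_power_bound) (auto intro: sum_nonneg)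
qed

end
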